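(* Under the standing setting and assumptions (A1)–(A3) described in the context, the optimal payoff map $\mathcal R$ is outer semicontinuous at every $X\in\mathcal X$.
   Context: Let $\mathcal X$ be a Hausdorff, first countable, locally convex topological vector space over $\mathbb R$, partially ordered by a partial order $\geq$ with positive cone $\mathcal X_+=\{X\in\mathcal X: X\geq 0\}$. Let $\mathcal M\subset\mathcal X$ be a vector subspace with $1<\dim\mathcal M<\infty$, carrying the relative topology, and let $\pi:\mathcal M\to\mathbb R$ be linear. Standing assumptions: (A1) there is $U\in\mathcal M\cap\mathcal X_+$ with $\pi(U)=1$; (A2) $\mathcal A\subsetneq\mathcal X$ is closed, contains $0$, and satisfies $\mathcal A+\mathcal X_+\subset\mathcal A$; (A3) the map $\rho:\mathcal X\to[-\infty,\infty]$, $\rho(X)=\inf\{\pi(Z): Z\in\mathcal M,\ X+Z\in\mathcal A\}$, is finitely valued and continuous. The optimal payoff map is $\mathcal R(X)=\{Z\in\mathcal M: X+Z\in\mathcal A,\ \pi(Z)=\rho(X)\}$. $\mathcal R$ is outer semicontinuous at $X$ if for every $Z\notin\mathcal R(X)$ there are open neighborhoods $\mathcal U_X\subset\mathcal X$ of $X$ and $\mathcal U_Z\subset\mathcal M$ of $Z$ such that $\mathcal R(Y)\cap\mathcal U_Z=\emptyset$ for all $Y\in\mathcal U_X$. *)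

theory Defs
  imports "HOL-Analysis.Analysis"
begin

text \<open>Hausdorffness and
  first countability are imposed through the type classes t2_space and
  first_countable_topology in the theorem.\<close>
definition locally_convex_tvs :: "'a::{real_vector, topological_space} itself \<Rightarrow> bool" where
  "locally_convex_tvs _ \<longleftrightarrow>
     continuous_on UNIV (\<lambda>(x::'a, y::'a). x + y) \<and>
     continuous_on UNIV (\<lambda>(c::real, x::'a). c *\<^sub>R x) \<and>
     (\<forall>U (x::'a). open U \<and> x \<in> U \<longrightarrow> (\<exists>V. open V \<and> convex V \<and> x \<in> V \<and> V \<subseteq> U))"

definition pos_cone :: "('a \<Rightarrow> 'a \<Rightarrow> bool) \<Rightarrow> 'a::zero set" where
  "pos_cone ge = {X. ge X 0}"

definition linear_on :: "'a::real_vector set \<Rightarrow> ('a \<Rightarrow> real) \<Rightarrow> bool" where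
  "linear_on M \<pi>\<^sub>0 \<longleftrightarrow>
     (\<forall>x\<in>M. \<forall>y\<in>M. \<pi>\<^sub>0 (x + y) = \<pi>\<^sub>0 x + \<pi>\<^sub>0 y) \<and> (\<forall>c. \<forall>x\<in>M. \<pi>\<^sub>0 (c *\<^sub>R x) = c * \<pi>\<^sub>0 x)"

definition rho :: "'a::real_vector set \<Rightarrow> ('a \<Rightarrow> real) \<Rightarrow> 'a set \<Rightarrow> 'a \<Rightarrow> ereal" where
  "rho M \<pi>\<^sub>0 A X = Inf ((\<lambda>Z. ereal (\<pi>\<^sub>0 Z)) ` {Z \<in> M. X + Z \<in> A})"

definition optR :: "'a::real_vector set \<Rightarrow> ('a \<Rightarrow> real) \<Rightarrow> 'a set \<Rightarrow> 'a \<Rightarrow> 'a set" where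
  "optR M \<pi>\<^sub>0 A X = {Z \<in> M. X + Z \<in> A \<and> ereal (\<pi>\<^sub>0 Z) = rho M \<pi>\<^sub>0 A X}"

definition outer_semicont_at :: "'a::topological_space set \<Rightarrow> ('a \<Rightarrow> 'a set) \<Rightarrow> 'a \<Rightarrow> bool" where
  "outer_semicont_at M R X \<longleftrightarrow>
     (\<forall>Z\<in>M. Z \<notin> R X \<longrightarrow>
        (\<exists>UX UZ. open UX \<and> X \<in> UX \<and> openin (top_of_set M) UZ \<and> Z \<in> UZ \<and>
                 (\<forall>Y\<in>UX. R Y \<inter> UZ = {})))"

end

theory Submission
  imports Defs
begin

text \<open>Cash invariance along \<open>M\<close> gives \<open>\<rho>(X - Z) = \<rho>(X) + \<pi>(Z)\<close> for \<open>Z \<in> M\<close>, so on \<open>M\<close> the price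
  is \<open>\<pi>(Z) = \<rho>(-Z) - \<rho>(0)\<close>, a continuous function of \<open>Z\<close> on the whole space.  Hence \<open>Z\<close> is an
  optimal payoff for \<open>X\<close> iff \<open>Z \<in> M\<close> and \<open>(X, Z)\<close> lies in the set
  \<open>{(X, Z). X + Z \<in> A \<and> \<rho>(-Z) - \<rho>(0) = \<rho>(X)}\<close>, which is closed because \<open>A\<close> is closed and
  \<open>\<rho>\<close> continuous.  A set-valued map whose graph is the trace on \<open>M\<close> of a closed set is
  outer semicontinuous.\<close>

lemma INF_add_ereal_const:
  fixes f :: "'b \<Rightarrow> ereal"
  shows "(INF x\<in>S. f x + ereal c) = (INF x\<in>S. f x) + ereal c"
proof (rule antisym)
  have "(INF x\<in>S. f x + ereal c) - ereal c \<le> (INF x\<in>S. f x)"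
  proof (rule INF_greatest)
    fix x assume "x \<in> S"
    then have "(INF x\<in>S. f x + ereal c) \<le> f x + ereal c" by (rule INF_lower)
    then show "(INF x\<in>S. f x + ereal c) - ereal c \<le> f x" by (simp add: ereal_minus_le)
  qed
  then show "(INF x\<in>S. f x + ereal c) \<le> (INF x\<in>S. f x) + ereal c"
    by (simp add: ereal_minus_le)
  show "(INF x\<in>S. f x) + ereal c \<le> (INF x\<in>S. f x + ereal c)"
    by (rule INF_greatest) (auto intro: add_right_mono INF_lower)
qed

lemma rho_translate:
  assumes "subspace M" and "linear_on M \<pi>\<^sub>0" and "W \<in> M"
  shows "rho M \<pi>\<^sub>0 A (Y - W) = rho M \<pi>\<^sub>0 A Y + ereal (\<pi>\<^sub>0 W)"
proof -
  let ?S = "{Z\<in>M. Y + Z \<in> A}"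
  have translate: "{Z\<in>M. Y - W + Z \<in> A} = (\<lambda>Z. Z + W) ` ?S"
  proof (intro equalityI subsetI)
    fix Z assume "Z \<in> {Z\<in>M. Y - W + Z \<in> A}"
    then have "Z - W \<in> ?S"
      using assms(1,3) by (auto simp: subspace_diff algebra_simps)
    then show "Z \<in> (\<lambda>Z. Z + W) ` ?S" by (rule rev_image_eqI) simp
  qed (use assms(1,3) in \<open>auto simp: subspace_add algebra_simps\<close>)
  have "\<pi>\<^sub>0 (Z + W) = \<pi>\<^sub>0 Z + \<pi>\<^sub>0 W" if "Z \<in> ?S" for Z
    using assms(2,3) that unfolding linear_on_def by auto
  then have "(INF Z\<in>?S. ereal (\<pi>\<^sub>0 (Z + W))) = (INF Z\<in>?S. ereal (\<pi>\<^sub>0 Z) + ereal (\<pi>\<^sub>0 W))"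
    by (intro INF_cong) auto
  then show ?thesis
    unfolding rho_def translate image_image INF_add_ereal_const .
qed

lemma optR_eq_rho_section:
  assumes "subspace M" and "linear_on M \<pi>\<^sub>0" and finite: "\<forall>X. \<bar>rho M \<pi>\<^sub>0 A X\<bar> \<noteq> \<infinity>"
  defines "r \<equiv> \<lambda>X. real_of_ereal (rho M \<pi>\<^sub>0 A X)"
  shows "optR M \<pi>\<^sub>0 A Y = {Z\<in>M. Y + Z \<in> A \<and> r (- Z) - r 0 = r Y}"
proof -
  have rho_r: "rho M \<pi>\<^sub>0 A X = ereal (r X)" for X
    using finite unfolding r_def by (simp add: ereal_real')
  have "\<pi>\<^sub>0 Z = r (- Z) - r 0" if "Z \<in> M" for Z
    using rho_translate[OF assms(1,2) that, of A 0] by (simp add: rho_r)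
  then show ?thesis
    unfolding optR_def by (auto simp: rho_r)
qed

lemma locally_convex_tvs_continuous_on_add:
  assumes "locally_convex_tvs TYPE('a::{real_vector, topological_space})"
    and "continuous_on S f" and "continuous_on S g"
  shows "continuous_on S (\<lambda>x. f x + g x :: 'a)"
proof -
  have "continuous_on UNIV (\<lambda>p::'a \<times> 'a. fst p + snd p)"
    using assms(1) unfolding locally_convex_tvs_def by (simp add: case_prod_unfold)
  from continuous_on_compose2[OF this continuous_on_Pair[OF assms(2,3)]] show ?thesis
    by simp
qed

lemma locally_convex_tvs_continuous_on_minus:
  assumes "locally_convex_tvs TYPE('a::{real_vector, topological_space})"
    and "continuous_on S f"
  shows "continuous_on S (\<lambda>x. - f x :: 'a)"
proof -
  have "continuous_on UNIV (\<lambda>p::real \<times> 'a. fst p *\<^sub>R snd p)"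
    using assms(1) unfolding locally_convex_tvs_def by (simp add: case_prod_unfold)
  from continuous_on_compose2[OF this continuous_on_Pair[OF continuous_on_const[of S "-1"] assms(2)]]
  show ?thesis
    by simp
qed

lemma outer_semicont_at_closed_graph:
  assumes "closed C" and "\<And>Y. R Y = {Z\<in>M. (Y, Z) \<in> C}"
  shows "outer_semicont_at M R X"
  unfolding outer_semicont_at_def
proof (intro ballI impI)
  fix Z assume "Z \<in> M" and "Z \<notin> R X"
  then have "(X, Z) \<in> - C" using assms(2) by auto
  moreover have "open (- C)" using assms(1) by (simp add: open_Compl)
  ultimately obtain U V where UV: "open U" "open V" "(X, Z) \<in> U \<times> V" "U \<times> V \<subseteq> - C"
    by (metis open_prod_elim)
  have "R Y \<inter> (M \<inter> V) = {}" if "Y \<in> U" for Y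
    using UV(4) that assms(2) by blast
  moreover have "openin (top_of_set M) (M \<inter> V)"
    using UV(2) by (rule openin_open_Int)
  ultimately show "\<exists>UX UZ. open UX \<and> X \<in> UX \<and> openin (top_of_set M) UZ \<and> Z \<in> UZ \<and>
                 (\<forall>Y\<in>UX. R Y \<inter> UZ = {})"
    using UV \<open>Z \<in> M\<close> by blast
qed

theorem mainTheorem3:
  fixes ge :: "'a::{real_vector, t2_space, first_countable_topology} \<Rightarrow> 'a \<Rightarrow> bool"
    and M A :: "'a set"
    and \<pi>\<^sub>0 :: "'a \<Rightarrow> real"
  assumes tvs: "locally_convex_tvs TYPE('a)"
    and po: "partial_order_on UNIV {(x, y). ge y x}"
    and subM: "subspace M"
    and finM: "\<exists>B. finite B \<and> independent B \<and> span B = M"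
    and dimM: "1 < dim M"
    and lin: "linear_on M \<pi>\<^sub>0"
    and A1: "\<exists>U\<in>M. U \<in> pos_cone ge \<and> \<pi>\<^sub>0 U = 1"
    and A2_closed: "closed A" and A2_zero: "0 \<in> A" and A2_proper: "A \<noteq> UNIV"
    and A2_mono: "\<forall>X\<in>A. \<forall>P\<in>pos_cone ge. X + P \<in> A"
    and A3_finite: "\<forall>X. \<bar>rho M \<pi>\<^sub>0 A X\<bar> \<noteq> \<infinity>"
    and A3_cont: "continuous_on UNIV (rho M \<pi>\<^sub>0 A)"
  shows "\<forall>X. outer_semicont_at M (optR M \<pi>\<^sub>0 A) X"
proof
  fix X
  define r where "r Y = real_of_ereal (rho M \<pi>\<^sub>0 A Y)" for Y
  have r_cont: "continuous_on UNIV r"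
    using A3_cont continuous_on_iff_real[of UNIV "rho M \<pi>\<^sub>0 A"] A3_finite
    unfolding r_def o_def by auto
  have sum_cont: "continuous_on UNIV (\<lambda>p::'a \<times> 'a. fst p + snd p)"
    by (intro locally_convex_tvs_continuous_on_add[OF tvs] continuous_on_fst continuous_on_snd
        continuous_on_id)
  have "continuous_on UNIV (\<lambda>p::'a \<times> 'a. - snd p)"
    by (intro locally_convex_tvs_continuous_on_minus[OF tvs] continuous_on_snd continuous_on_id)
  then have "closed {p::'a \<times> 'a. r (- snd p) - r 0 = r (fst p)}"
    by (intro closed_Collect_eq continuous_intros continuous_on_compose2[OF r_cont]) auto
  moreover have "closed {p::'a \<times> 'a. fst p + snd p \<in> A}"
    using continuous_on_closed_vimage[of UNIV, THEN iffD1, OF closed_UNIV sum_cont, rule_format,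
        OF A2_closed]
    by (simp add: vimage_def)
  ultimately show "outer_semicont_at M (optR M \<pi>\<^sub>0 A) X"
    by (intro outer_semicont_at_closed_graph[where C = "{p. fst p + snd p \<in> A \<and>
          r (- snd p) - r 0 = r (fst p)}"])
       (auto simp: Collect_conj_eq r_def optR_eq_rho_section[OF subM lin A3_finite])
qed

end
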